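(* Consider the multivariate LISO loss $L_\lambda$ (defined in the context) for fixed $\lambda\ge 0$, and the randomized LISO-backfitting procedure: start from any feasible $f^0=(\theta^0_1,\dots,\theta^0_p)$; at cycle $m=1,2,\dots$, draw a permutation $\sigma_m$ of $\{1,\dots,p\}$ uniformly at random, independently of everything else, and for $j=1,\dots,p$ in turn, with $k=\sigma_m(j)$, replace the current $\theta_k$ by the minimiser of $L_\lambda$ over $\theta_k\in\mathcal{F}_k$ with all other components held at their current values; let $f^m$ be the state at the end of cycle $m$. Then with probability 1, $L_\lambda(f^m)$ converges (monotonically) to $\min L_\lambda$. Moreover, if $L_\lambda$ has a unique minimiser, then $f^m$ converges to it with probability 1.
   Context: Data: $Y\in\mathbb{R}^n$ with $\sum_iY_i=0$, and covariate matrix $X\in\mathbb{R}^{n\times p}$ with columns $X^{(1)},\dots,X^{(p)}$. For each $k$, $\mathcal{F}_k$ is the set of vectors $\theta_k\in\mathbb{R}^n$ with $\sum_i\theta_{k,i}=0$ that are monotone in $X^{(k)}$: $\theta_{k,i}\le\theta_{k,j}$ whenever $X^{(k)}_i<X^{(k)}_j$ and $\theta_{k,i}=\theta_{k,j}$ whenever $X^{(k)}_i=X^{(k)}_j$ (these are the fitted values $f_k(X^{(k)}_i)$ of mean-zero nondecreasing functions $f_k$). The LISO loss is $$L_\lambda(\theta_1,\dots,\theta_p)=\tfrac12\Big\|Y-\sum_{k=1}^p\theta_k\Big\|^2+\lambda\sum_{k=1}^p\big(\max_i\theta_{k,i}-\min_i\theta_{k,i}\big)$$ over $(\theta_1,\dots,\theta_p)\in\mathcal{F}_1\times\dots\times\mathcal{F}_p$.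 (Each single-block minimisation has a unique solution, given by a thresholded isotonic regression of the partial residual.) *)

theory Defs
  imports "HOL-Probability.Probability" "HOL-Combinatorics.Multiset_Permutations"
begin

text \<open>Observations are indexed by the finite type 'n, covariates by the finite type 'p.
  X $ i $ k is the k-th covariate of observation i. A state is
  theta :: real^'n^'p, with theta $ k the fitted vector of the k-th component.\<close>

definition Fk :: "real^'p^'n \<Rightarrow> 'p \<Rightarrow> (real^'n) set" where
  "Fk X k = {t. (\<Sum>i\<in>UNIV. t $ i) = 0 \<and>
      (\<forall>i j. X $ i $ k < X $ j $ k \<longrightarrow> t $ i \<le> t $ j) \<and>
      (\<forall>i j. X $ i $ k = X $ j $ k \<longrightarrow> t $ i = t $ j)}"

definition feasible :: "real^'p^'n \<Rightarrow> (real^'n^'p) set" where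
  "feasible X = {f. \<forall>k. f $ k \<in> Fk X k}"

definition liso_loss :: "real^'n \<Rightarrow> real \<Rightarrow> real^'n^'p \<Rightarrow> real" where
  "liso_loss Y lam f =
     (1/2) * (norm (Y - (\<Sum>k\<in>UNIV. f $ k)))\<^sup>2
     + lam * (\<Sum>k\<in>UNIV. Max (range (\<lambda>i. f $ k $ i)) - Min (range (\<lambda>i. f $ k $ i)))"

definition upd_comp :: "real^'n^'p \<Rightarrow> 'p \<Rightarrow> real^'n \<Rightarrow> real^'n^'p" where
  "upd_comp f k t = (\<chi> j. if j = k then t else f $ j)"

definition block_min :: "real^'n \<Rightarrow> real^'p^'n \<Rightarrow> real \<Rightarrow> real^'n^'p \<Rightarrow> 'p \<Rightarrow> real^'n" where
  "block_min Y X lam f k = (THE t. t \<in> Fk X k \<and>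
      (\<forall>t'\<in>Fk X k. liso_loss Y lam (upd_comp f k t) \<le> liso_loss Y lam (upd_comp f k t')))"

definition block_step :: "real^'n \<Rightarrow> real^'p^'n \<Rightarrow> real \<Rightarrow> real^'n^'p \<Rightarrow> 'p \<Rightarrow> real^'n^'p" where
  "block_step Y X lam f k = upd_comp f k (block_min Y X lam f k)"

text \<open>One cycle: update blocks in the order given by the permutation (a list enumerating all of 'p).\<close>
definition cycle :: "real^'n \<Rightarrow> real^'p^'n \<Rightarrow> real \<Rightarrow> real^'n^'p \<Rightarrow> 'p list \<Rightarrow> real^'n^'p" where
  "cycle Y X lam f \<sigma> = foldl (block_step Y X lam) f \<sigma>"

text \<open>Trajectory: state after m cycles, where cycle m+1 uses the permutation \<omega> !! m.\<close>
primrec backfit :: "real^'n \<Rightarrow> real^'p^'n \<Rightarrow> real \<Rightarrow> real^'n^'p \<Rightarrow> 'p list stream \<Rightarrow> nat \<Rightarrow> real^'n^'p" where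
  "backfit Y X lam f0 \<omega> 0 = f0"
| "backfit Y X lam f0 \<omega> (Suc m) = cycle Y X lam (backfit Y X lam f0 \<omega> m) (\<omega> !! m)"

definition perm_law :: "('p::finite) list stream measure" where
  "perm_law = stream_space (measure_pmf (pmf_of_set (permutations_of_set (UNIV :: 'p set))))"

end

theory Submission
  imports Defs
begin

text \<open>
  For a fixed block k, the LISO loss equals, up to a constant, the proximal
  objective 1/2 |r - t|^2 + lam * spread t of the partial residual r, minimised over the closed
  convex set Fk.  Its minimiser satisfies a variational inequality, which gives
  (i) sufficient decrease: an update moving the state by d lowers the loss by at least d^2/2;
  (ii) near-optimality: after a full cycle of path length c, the loss exceeds that of any
  feasible state g by at most p * c * |g - state|.
  By (i) the cycle path lengths c_m are square-summable.  If the decreasing loss values had a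
  limit above the infimum, (ii) would force c_m * (A + sum_{i<=m} c_i) >= eps for all m, which
  is impossible for a square-summable sequence since the harmonic series diverges.  This
  argument works for every sequence of cycle orders, hence almost surely under perm_law.
  Finally, a minimising sequence of a convex continuous function on a closed convex set of a
  Euclidean space converges to its minimiser when that minimiser is unique.
\<close>

definition spread :: "real^'n \<Rightarrow> real" where
  "spread t = Max (range (\<lambda>i. t$i)) - Min (range (\<lambda>i. t$i))"

lemma Max_range_vec_ge: "t$i \<le> Max (range (\<lambda>i. t$i))"
  for t :: "real^'n" by (rule Max_ge) auto

lemma Min_range_vec_le: "Min (range (\<lambda>i. t$i)) \<le> t$i"
  for t :: "real^'n" by (rule Min_le) auto

lemma Max_range_vec_le: "(\<And>i. t$i \<le> c) \<Longrightarrow> Max (range (\<lambda>i. t$i)) \<le> c"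
  for t :: "real^'n" by (subst Max_le_iff) auto

lemma Min_range_vec_ge: "(\<And>i. c \<le> t$i) \<Longrightarrow> c \<le> Min (range (\<lambda>i. t$i))"
  for t :: "real^'n" by (subst Min_ge_iff) auto

lemma spread_nonneg: "0 \<le> spread t" for t :: "real^'n"
  unfolding spread_def using Max_range_vec_ge[of t] Min_range_vec_le[of t]
  by (meson diff_ge_0_iff_ge order_trans)

text \<open>The largest entry is a convex and the smallest a concave function of the vector,
  so the spread is convex.\<close>
lemma convex_on_spread: "convex_on UNIV (spread :: real^'n \<Rightarrow> real)"
proof (rule convex_onI)
  fix e :: real and t u :: "real^'n"
  assume e: "0 < e" "e < 1"
  let ?w = "(1-e) *\<^sub>R t + e *\<^sub>R u"
  have "Max (range (\<lambda>i. ?w$i)) \<le> (1-e) * Max (range (\<lambda>i. t$i)) + e * Max (range (\<lambda>i. u$i))"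
  proof (rule Max_range_vec_le)
    fix i
    show "?w$i \<le> (1-e) * Max (range (\<lambda>i. t$i)) + e * Max (range (\<lambda>i. u$i))"
      using e Max_range_vec_ge[of t i] Max_range_vec_ge[of u i]
      by (simp add: add_mono mult_left_mono)
  qed
  moreover have "(1-e) * Min (range (\<lambda>i. t$i)) + e * Min (range (\<lambda>i. u$i)) \<le> Min (range (\<lambda>i. ?w$i))"
  proof (rule Min_range_vec_ge)
    fix i
    show "(1-e) * Min (range (\<lambda>i. t$i)) + e * Min (range (\<lambda>i. u$i)) \<le> ?w$i"
      using e Min_range_vec_le[of t i] Min_range_vec_le[of u i]
      by (simp add: add_mono mult_left_mono)
  qed
  ultimately show "spread ?w \<le> (1-e) * spread t + e * spread u"
    unfolding spread_def by (simp add: algebra_simps)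
qed simp

text \<open>Each entry moves by at most the Euclidean distance, so the spread is 2-Lipschitz.\<close>
lemma spread_lipschitz: "\<bar>spread t - spread u\<bar> \<le> 2 * norm (t - u)"
  for t u :: "real^'n"
proof -
  have close: "t$i \<le> u$i + norm (t - u)" "u$i \<le> t$i + norm (t - u)" for i
    using component_le_norm_cart[of "t - u" i] by (auto simp: abs_le_iff)
  have "Max (range (\<lambda>i. t$i)) \<le> Max (range (\<lambda>i. u$i)) + norm (t - u)"
    by (intro Max_range_vec_le order.trans[OF close(1)] add_right_mono Max_range_vec_ge)
  moreover have "Max (range (\<lambda>i. u$i)) \<le> Max (range (\<lambda>i. t$i)) + norm (t - u)"
    by (intro Max_range_vec_le order.trans[OF close(2)] add_right_mono Max_range_vec_ge)
  moreover have "Min (range (\<lambda>i. u$i)) \<le> Min (range (\<lambda>i. t$i)) + norm (t - u)"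
    using Min_range_vec_ge[of "Min (range (\<lambda>i. u$i)) - norm (t - u)" t]
      Min_range_vec_le[of u] close(2) by (smt (verit))
  moreover have "Min (range (\<lambda>i. t$i)) \<le> Min (range (\<lambda>i. u$i)) + norm (t - u)"
    using Min_range_vec_ge[of "Min (range (\<lambda>i. t$i)) - norm (t - u)" u]
      Min_range_vec_le[of t] close(1) by (smt (verit))
  ultimately show ?thesis unfolding spread_def abs_le_iff by linarith
qed

lemma continuous_on_spread: "continuous_on S (spread :: real^'n \<Rightarrow> real)"
proof -
  have "2-lipschitz_on S (spread :: real^'n \<Rightarrow> real)"
    by (rule lipschitz_onI) (use spread_lipschitz in \<open>auto simp: dist_norm\<close>)
  then show ?thesis by (rule lipschitz_on_continuous_on)
qed

section \<open>The loss as a function of one block\<close>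

definition fit_sum :: "real^'n^'p \<Rightarrow> real^'n" where
  "fit_sum f = (\<Sum>k\<in>UNIV. f$k)"

definition partial_resid :: "real^'n \<Rightarrow> real^'n^'p \<Rightarrow> 'p \<Rightarrow> real^'n" where
  "partial_resid Y f k = Y - fit_sum f + f$k"

text \<open>The proximal objective whose minimisation over Fk is a single block update.\<close>
definition prox_obj :: "real \<Rightarrow> real^'n \<Rightarrow> real^'n \<Rightarrow> real" where
  "prox_obj lam r t = 1/2 * (norm (r - t))\<^sup>2 + lam * spread t"

lemma liso_loss_eq: "liso_loss Y lam f = 1/2 * (norm (Y - fit_sum f))\<^sup>2 + lam * (\<Sum>k\<in>UNIV. spread (f$k))"
  unfolding liso_loss_def fit_sum_def spread_def by simp

lemma upd_comp_nth: "upd_comp f k t $ j = (if j = k then t else f$j)"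
  by (simp add: upd_comp_def)

lemma upd_comp_same: "upd_comp f k (f$k) = f"
  by (simp add: upd_comp_def vec_eq_iff)

lemma sum_update_one:
  fixes g :: "'p::finite \<Rightarrow> 'a::ab_group_add"
  shows "(\<Sum>j\<in>UNIV. if j = k then a else g j) = (\<Sum>j\<in>UNIV. g j) - g k + a"
  using sum.remove[of UNIV k "\<lambda>j. if j = k then a else g j"] sum.remove[of UNIV k g]
  by (simp add: sum.cong[of "UNIV - {k}" _ "\<lambda>j. if j = k then a else g j" g])

lemma fit_sum_upd_comp: "fit_sum (upd_comp f k t) = fit_sum f - f$k + t"
  unfolding fit_sum_def upd_comp_nth by (rule sum_update_one)

lemma liso_loss_upd_comp:
  "liso_loss Y lam (upd_comp f k t) =
     prox_obj lam (partial_resid Y f k) t + lam * ((\<Sum>j\<in>UNIV. spread (f$j)) - spread (f$k))"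
proof -
  have spreads: "(\<Sum>j\<in>UNIV. spread (upd_comp f k t $ j)) = (\<Sum>j\<in>UNIV. spread (f$j)) - spread (f$k) + spread t"
    unfolding upd_comp_nth using sum_update_one[of k "spread t" "\<lambda>j. spread (f$j)"]
    by (simp add: if_distrib)
  show ?thesis
    unfolding liso_loss_eq fit_sum_upd_comp prox_obj_def partial_resid_def spreads
    by (simp add: algebra_simps)
qed

lemma convex_Fk:
  fixes X :: "real^'p^'n"
  shows "convex (Fk X k)"
proof (rule convexI)
  fix t u :: "real^'n" and a b :: real
  assume t: "t \<in> Fk X k" and u: "u \<in> Fk X k" and ab: "0 \<le> a" "0 \<le> b" "a + b = 1"
  have "(\<Sum>i\<in>UNIV. (a *\<^sub>R t + b *\<^sub>R u)$i) = a * (\<Sum>i\<in>UNIV. t$i) + b * (\<Sum>i\<in>UNIV. u$i)"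
    by (simp add: sum.distrib sum_distrib_left)
  moreover have "(\<Sum>i\<in>UNIV. t$i) = 0" "(\<Sum>i\<in>UNIV. u$i) = 0"
    using t u unfolding Fk_def mem_Collect_eq by blast+
  ultimately have "(\<Sum>i\<in>UNIV. (a *\<^sub>R t + b *\<^sub>R u)$i) = 0"
    by simp
  moreover have "(a *\<^sub>R t + b *\<^sub>R u)$i \<le> (a *\<^sub>R t + b *\<^sub>R u)$j" if "X$i$k < X$j$k" for i j
  proof -
    have "t$i \<le> t$j" "u$i \<le> u$j"
      using t u that unfolding Fk_def mem_Collect_eq by blast+
    then show ?thesis using ab by (simp add: add_mono mult_left_mono)
  qed
  moreover have "(a *\<^sub>R t + b *\<^sub>R u)$i = (a *\<^sub>R t + b *\<^sub>R u)$j" if "X$i$k = X$j$k" for i j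
  proof -
    have "t$i = t$j" "u$i = u$j"
      using t u that unfolding Fk_def mem_Collect_eq by blast+
    then show ?thesis by simp
  qed
  ultimately show "a *\<^sub>R t + b *\<^sub>R u \<in> Fk X k"
    unfolding Fk_def mem_Collect_eq by blast
qed

lemma closed_Fk: "closed (Fk X k)"
  unfolding Fk_def
  by (intro closed_Collect_conj closed_Collect_all closed_Collect_imp open_Collect_const
        closed_Collect_eq closed_Collect_le continuous_intros)

lemma zero_in_Fk: "0 \<in> Fk X k"
  by (simp add: Fk_def)

lemma convex_feasible:
  fixes X :: "real^'p^'n"
  shows "convex (feasible X :: (real^'n^'p) set)"
proof (rule convexI)
  fix f g :: "real^'n^'p" and a b :: real
  assume "f \<in> feasible X" "g \<in> feasible X" "0 \<le> a" "0 \<le> b" "a + b = 1"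
  then have "a *\<^sub>R f$k + b *\<^sub>R g$k \<in> Fk X k" for k
    by (intro convexD[OF convex_Fk]) (auto simp: feasible_def)
  then show "a *\<^sub>R f + b *\<^sub>R g \<in> feasible X"
    by (simp add: feasible_def)
qed

lemma closed_feasible: "closed (feasible X)"
proof -
  have "feasible X = (\<Inter>k. (\<lambda>f. f $ k) -` Fk X k)"
    by (auto simp: feasible_def)
  then show ?thesis
    by (simp add: closed_INT closed_vimage_vec_nth closed_Fk)
qed

section \<open>The proximal problem\<close>

lemma norm_diff_sq: "(norm (a - w))\<^sup>2 = (norm a)\<^sup>2 - 2 * inner a w + (norm w)\<^sup>2"
  for a w :: "'a::real_inner"
  unfolding power2_norm_eq_inner by (simp add: inner_diff_left inner_diff_right inner_commute)

text \<open>A proximal problem over a closed set containing 0 has a minimiser: outside the ball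
  around r of radius |r| the objective exceeds its value at 0.\<close>
lemma prox_obj_has_min:
  fixes C :: "(real^'n) set"
  assumes lam: "0 \<le> lam" and C: "closed C" "0 \<in> C"
  shows "\<exists>t\<in>C. \<forall>u\<in>C. prox_obj lam r t \<le> prox_obj lam r u"
proof -
  let ?K = "C \<inter> cball r (norm r)"
  have "compact ?K" using C by (intro closed_Int_compact) auto
  moreover have "0 \<in> ?K" using C by (simp add: dist_norm)
  moreover have "continuous_on ?K (prox_obj lam r)"
    unfolding prox_obj_def by (intro continuous_intros continuous_on_spread)
  ultimately obtain t where t: "t \<in> ?K" and tmin: "\<forall>u\<in>?K. prox_obj lam r t \<le> prox_obj lam r u"
    using continuous_attains_inf[of ?K "prox_obj lam r"] by blast
  have "prox_obj lam r t \<le> prox_obj lam r u" if u: "u \<in> C" for u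
  proof (cases "u \<in> cball r (norm r)")
    case True then show ?thesis using tmin u by auto
  next
    case False
    then have "(norm r)\<^sup>2 < (norm (r - u))\<^sup>2" by (simp add: dist_norm power_strict_mono)
    moreover have "prox_obj lam r t \<le> 1/2 * (norm r)\<^sup>2"
      using tmin \<open>0 \<in> ?K\<close> by (force simp: prox_obj_def spread_def)
    moreover have "1/2 * (norm (r - u))\<^sup>2 \<le> prox_obj lam r u"
      using lam spread_nonneg[of u] by (simp add: prox_obj_def)
    ultimately show ?thesis by linarith
  qed
  then show ?thesis using t by blast
qed

text \<open>First-order optimality of a proximal minimiser over a convex set: a variational
  inequality.  If it failed for some u, a short step towards u would decrease the objective.\<close>
lemma prox_obj_variational:
  fixes C :: "(real^'n) set"
  assumes lam: "0 \<le> lam" and C: "convex C"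
    and t: "t \<in> C" and tmin: "\<forall>u\<in>C. prox_obj lam r t \<le> prox_obj lam r u" and u: "u \<in> C"
  shows "inner (r - t) (u - t) \<le> lam * (spread u - spread t)"
proof (rule ccontr)
  assume violated: "\<not> ?thesis"
  define \<delta> where "\<delta> = inner (r - t) (u - t) - lam * (spread u - spread t)"
  define w where "w = u - t"
  have dpos: "0 < \<delta>" using violated by (simp add: \<delta>_def)
  then have "w \<noteq> 0" by (auto simp: \<delta>_def w_def)
  then have wpos: "0 < (norm w)\<^sup>2" by simp
  define e where "e = min 1 (\<delta> / (norm w)\<^sup>2)"
  have e: "0 < e" "e \<le> 1" "e * (norm w)\<^sup>2 \<le> \<delta>"
    using dpos wpos by (auto simp: e_def min_def field_simps)
  let ?v = "(1-e) *\<^sub>R t + e *\<^sub>R u"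
  have v: "?v \<in> C" using convexD_alt[OF C t u] e by simp
  have "r - ?v = (r - t) - e *\<^sub>R w" by (simp add: w_def algebra_simps)
  then have dist_v: "(norm (r - ?v))\<^sup>2 = (norm (r - t))\<^sup>2 - 2 * e * inner (r - t) w + e\<^sup>2 * (norm w)\<^sup>2"
    using norm_diff_sq[of "r - t" "e *\<^sub>R w"] by (simp only:) (simp add: power_mult_distrib)
  have "lam * spread ?v \<le> lam * ((1-e) * spread t + e * spread u)"
    using e lam by (intro mult_left_mono convex_onD[OF convex_on_spread]) auto
  then have "prox_obj lam r ?v \<le> prox_obj lam r t - e * \<delta> + e/2 * (e * (norm w)\<^sup>2)"
    unfolding prox_obj_def dist_v \<delta>_def w_def by (simp add: algebra_simps power2_eq_square)
  also have "e/2 * (e * (norm w)\<^sup>2) \<le> e/2 * \<delta>"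
    using e by (intro mult_left_mono) auto
  finally have "prox_obj lam r ?v < prox_obj lam r t"
    using mult_pos_pos[OF e(1) dpos] by linarith
  with tmin v show False by force
qed

lemma prox_obj_quadratic_growth:
  fixes r t u :: "real^'n"
  assumes vi: "inner (r - t) (u - t) \<le> lam * (spread u - spread t)"
  shows "prox_obj lam r t + 1/2 * (norm (u - t))\<^sup>2 \<le> prox_obj lam r u"
proof -
  have "(norm (r - u))\<^sup>2 = (norm ((r - t) - (u - t)))\<^sup>2"
    by simp
  also have "\<dots> = (norm (r - t))\<^sup>2 - 2 * inner (r - t) (u - t) + (norm (u - t))\<^sup>2"
    by (rule norm_diff_sq)
  finally show ?thesis
    using vi unfolding prox_obj_def by (simp add: algebra_simps)
qed

text \<open>The block minimiser is the unique minimiser of the proximal objective of the partial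
  residual over Fk; uniqueness (needed to evaluate the definite description) follows from
  quadratic growth.\<close>
lemma block_min_minimises:
  assumes lam: "0 \<le> lam"
  shows "block_min Y X lam f k \<in> Fk X k \<and>
    (\<forall>u\<in>Fk X k. prox_obj lam (partial_resid Y f k) (block_min Y X lam f k)
                  \<le> prox_obj lam (partial_resid Y f k) u)"
proof -
  let ?r = "partial_resid Y f k"
  let ?P = "\<lambda>t. t \<in> Fk X k \<and>
      (\<forall>t'\<in>Fk X k. liso_loss Y lam (upd_comp f k t) \<le> liso_loss Y lam (upd_comp f k t'))"
  have P_iff: "?P t \<longleftrightarrow> t \<in> Fk X k \<and> (\<forall>u\<in>Fk X k. prox_obj lam ?r t \<le> prox_obj lam ?r u)" for t
    unfolding liso_loss_upd_comp by simp
  obtain t where t: "t \<in> Fk X k" "\<forall>u\<in>Fk X k. prox_obj lam ?r t \<le> prox_obj lam ?r u"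
    using prox_obj_has_min[OF lam closed_Fk zero_in_Fk] by blast
  have unique: "t' = t" if "?P t'" for t'
  proof -
    have t': "t' \<in> Fk X k" "prox_obj lam ?r t' \<le> prox_obj lam ?r t" using that t(1) P_iff by auto
    have "prox_obj lam ?r t + 1/2 * (norm (t' - t))\<^sup>2 \<le> prox_obj lam ?r t'"
      by (intro prox_obj_quadratic_growth prox_obj_variational[OF lam convex_Fk t t'(1)])
    then have "(norm (t' - t))\<^sup>2 \<le> 0" using t'(2) by linarith
    then show ?thesis by simp
  qed
  have "?P t" using t P_iff by blast
  then have "block_min Y X lam f k = t"
    unfolding block_min_def using unique by (rule the_equality)
  then show ?thesis using t by simp
qed

definition block_move :: "real^'n \<Rightarrow> real^'p^'n \<Rightarrow> real \<Rightarrow> real^'n^'p \<Rightarrow> 'p \<Rightarrow> real" where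
  "block_move Y X lam f k = norm (block_min Y X lam f k - f$k)"

lemma block_step_nth: "block_step Y X lam f k $ j = (if j = k then block_min Y X lam f k else f$j)"
  by (simp add: block_step_def upd_comp_nth)

lemma fit_sum_block_step: "fit_sum (block_step Y X lam f k) = fit_sum f - f$k + block_min Y X lam f k"
  unfolding block_step_def by (rule fit_sum_upd_comp)

lemma norm_block_step_diff: "norm (block_step Y X lam f k - f) = block_move Y X lam f k"
proof -
  have "(block_step Y X lam f k - f)$i = (if i = k then block_min Y X lam f k - f$k else 0)" for i
    by (simp add: block_step_nth)
  then have "(\<Sum>i\<in>UNIV. (norm ((block_step Y X lam f k - f)$i))\<^sup>2) = (norm (block_min Y X lam f k - f$k))\<^sup>2"
    by (simp add: if_distrib[of "\<lambda>x. (norm x)\<^sup>2"] cong: if_cong)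
  then show ?thesis
    by (simp add: norm_vec_def[of "block_step Y X lam f k - f"] L2_set_def block_move_def)
qed

lemma norm_fit_sum_block_step_diff:
  "norm (fit_sum (block_step Y X lam f k) - fit_sum f) = block_move Y X lam f k"
  unfolding fit_sum_block_step block_move_def by (simp add: algebra_simps)

lemma block_step_feasible:
  assumes "0 \<le> lam" "f \<in> feasible X"
  shows "block_step Y X lam f k \<in> feasible X"
  using assms block_min_minimises[OF assms(1), of Y X f k]
  unfolding feasible_def mem_Collect_eq block_step_nth by auto

lemma block_step_decrease:
  assumes lam: "0 \<le> lam" and f: "f \<in> feasible X"
  shows "liso_loss Y lam (block_step Y X lam f k) + 1/2 * (block_move Y X lam f k)\<^sup>2 \<le> liso_loss Y lam f"
proof -
  let ?r = "partial_resid Y f k" and ?t = "block_min Y X lam f k"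
  have fk: "f$k \<in> Fk X k" using f by (simp add: feasible_def)
  have t: "?t \<in> Fk X k" "\<forall>u\<in>Fk X k. prox_obj lam ?r ?t \<le> prox_obj lam ?r u"
    using block_min_minimises[OF lam] by blast+
  have "prox_obj lam ?r ?t + 1/2 * (norm (f$k - ?t))\<^sup>2 \<le> prox_obj lam ?r (f$k)"
    by (intro prox_obj_quadratic_growth prox_obj_variational[OF lam convex_Fk t fk])
  then show ?thesis
    using liso_loss_upd_comp[of Y lam f k "f$k"] liso_loss_upd_comp[of Y lam f k ?t]
    unfolding block_step_def block_move_def upd_comp_same by (simp add: norm_minus_commute)
qed

lemma block_step_variational:
  assumes lam: "0 \<le> lam" and u: "u \<in> Fk X k"
  shows "inner (Y - fit_sum (block_step Y X lam f k)) (u - block_step Y X lam f k $ k)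
           \<le> lam * (spread u - spread (block_step Y X lam f k $ k))"
proof -
  let ?r = "partial_resid Y f k" and ?t = "block_min Y X lam f k"
  have t: "?t \<in> Fk X k" "\<forall>u\<in>Fk X k. prox_obj lam ?r ?t \<le> prox_obj lam ?r u"
    using block_min_minimises[OF lam] by blast+
  have "inner (?r - ?t) (u - ?t) \<le> lam * (spread u - spread ?t)"
    by (rule prox_obj_variational[OF lam convex_Fk t u])
  moreover have "?r - ?t = Y - fit_sum (block_step Y X lam f k)"
    unfolding fit_sum_block_step partial_resid_def by simp
  ultimately show ?thesis by (simp add: block_step_nth)
qed

section \<open>A cycle of block updates\<close>

lemma cycle_Nil [simp]: "cycle Y X lam f [] = f"
  by (simp add: cycle_def)

lemma cycle_Cons [simp]: "cycle Y X lam f (k # \<sigma>) = cycle Y X lam (block_step Y X lam f k) \<sigma>"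
  by (simp add: cycle_def)

fun cycle_path :: "real^'n \<Rightarrow> real^'p^'n \<Rightarrow> real \<Rightarrow> real^'n^'p \<Rightarrow> 'p list \<Rightarrow> real" where
  "cycle_path Y X lam f [] = 0"
| "cycle_path Y X lam f (k # \<sigma>) = block_move Y X lam f k + cycle_path Y X lam (block_step Y X lam f k) \<sigma>"

lemma cycle_path_nonneg: "0 \<le> cycle_path Y X lam f \<sigma>"
  by (induction \<sigma> arbitrary: f) (auto simp: block_move_def)

lemma cycle_feasible:
  assumes "0 \<le> lam" "f \<in> feasible X"
  shows "cycle Y X lam f \<sigma> \<in> feasible X"
  using assms(2) by (induction \<sigma> arbitrary: f) (auto intro: block_step_feasible[OF assms(1)])

lemma cycle_nth_unchanged: "k \<notin> set \<sigma> \<Longrightarrow> cycle Y X lam f \<sigma> $ k = f$k"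
  by (induction \<sigma> arbitrary: f) (auto simp: block_step_nth)

lemma cycle_displacement: "norm (cycle Y X lam f \<sigma> - f) \<le> cycle_path Y X lam f \<sigma>"
proof (induction \<sigma> arbitrary: f)
  case (Cons k \<sigma>)
  let ?f1 = "block_step Y X lam f k"
  have "norm (cycle Y X lam ?f1 \<sigma> - f) \<le> norm (cycle Y X lam ?f1 \<sigma> - ?f1) + norm (?f1 - f)"
    using norm_triangle_ineq[of "cycle Y X lam ?f1 \<sigma> - ?f1" "?f1 - f"] by simp
  then show ?case using Cons.IH[of ?f1] by (simp add: norm_block_step_diff)
qed simp

lemma cycle_fit_displacement:
  "norm (fit_sum (cycle Y X lam f \<sigma>) - fit_sum f) \<le> cycle_path Y X lam f \<sigma>"
proof (induction \<sigma> arbitrary: f)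
  case (Cons k \<sigma>)
  let ?f1 = "block_step Y X lam f k"
  have "norm (fit_sum (cycle Y X lam ?f1 \<sigma>) - fit_sum f)
        \<le> norm (fit_sum (cycle Y X lam ?f1 \<sigma>) - fit_sum ?f1) + norm (fit_sum ?f1 - fit_sum f)"
    using norm_triangle_ineq[of "fit_sum (cycle Y X lam ?f1 \<sigma>) - fit_sum ?f1" "fit_sum ?f1 - fit_sum f"]
    by simp
  then show ?case using Cons.IH[of ?f1] by (simp add: norm_fit_sum_block_step_diff)
qed simp

lemma cycle_loss_le:
  assumes lam: "0 \<le> lam"
  shows "f \<in> feasible X \<Longrightarrow> liso_loss Y lam (cycle Y X lam f \<sigma>) \<le> liso_loss Y lam f"
proof (induction \<sigma> arbitrary: f)
  case (Cons k \<sigma>)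
  have "liso_loss Y lam (cycle Y X lam (block_step Y X lam f k) \<sigma>) \<le> liso_loss Y lam (block_step Y X lam f k)"
    by (intro Cons.IH block_step_feasible[OF lam Cons.prems])
  also have "\<dots> \<le> liso_loss Y lam f"
    using block_step_decrease[OF lam Cons.prems, of Y k] zero_le_power2[of "block_move Y X lam f k"]
    by linarith
  finally show ?case by simp
qed simp

text \<open>Cauchy-Schwarz in the form needed to add one more move to a path.\<close>
lemma sq_add_le_weighted:
  fixes a b n E :: real
  assumes "0 \<le> n" "0 \<le> E" "b\<^sup>2 \<le> n * E"
  shows "(a + b)\<^sup>2 \<le> (n + 1) * (a\<^sup>2 + E)"
proof (cases "n = 0")
  case True
  then show ?thesis using assms by simp
next
  case False
  have "n * (a + b)\<^sup>2 + (n * a - b)\<^sup>2 = n * (n + 1) * a\<^sup>2 + (n + 1) * b\<^sup>2"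
    by (simp add: power2_eq_square algebra_simps)
  also have "\<dots> \<le> n * (n + 1) * a\<^sup>2 + (n + 1) * (n * E)"
    using assms by (intro add_left_mono mult_left_mono) auto
  also have "\<dots> = n * ((n + 1) * (a\<^sup>2 + E))"
    by (simp add: algebra_simps)
  finally have "n * (a + b)\<^sup>2 \<le> n * ((n + 1) * (a\<^sup>2 + E))"
    using zero_le_power2[of "n * a - b"] by linarith
  then show ?thesis using False assms(1) by simp
qed

text \<open>Summing sufficient decrease over a cycle: the squared path length is controlled by the
  decrease of the loss.\<close>
lemma cycle_path_sq_le:
  assumes lam: "0 \<le> lam"
  shows "f \<in> feasible X \<Longrightarrow>
    (cycle_path Y X lam f \<sigma>)\<^sup>2 \<le> 2 * real (length \<sigma>) * (liso_loss Y lam f - liso_loss Y lam (cycle Y X lam f \<sigma>))"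
proof (induction \<sigma> arbitrary: f)
  case (Cons k \<sigma>)
  let ?f1 = "block_step Y X lam f k" and ?L = "liso_loss Y lam"
  let ?g = "cycle Y X lam ?f1 \<sigma>"
  have f1: "?f1 \<in> feasible X" by (rule block_step_feasible[OF lam Cons.prems])
  have "(cycle_path Y X lam f (k # \<sigma>))\<^sup>2
        \<le> (real (length \<sigma>) + 1) * ((block_move Y X lam f k)\<^sup>2 + 2 * (?L ?f1 - ?L ?g))"
    unfolding cycle_path.simps using Cons.IH[OF f1] cycle_loss_le[OF lam f1, of Y \<sigma>]
    by (intro sq_add_le_weighted) (auto simp: mult_ac)
  also have "\<dots> \<le> (real (length \<sigma>) + 1) * (2 * (?L f - ?L ?g))"
    using block_step_decrease[OF lam Cons.prems, of Y k] by (intro mult_left_mono) auto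
  finally show ?case by (simp add: algebra_simps)
qed simp

text \<open>After a cycle in which block k was updated, block k still nearly satisfies its
  optimality condition: the later updates moved the fit by at most the path length.\<close>
lemma cycle_variational:
  assumes lam: "0 \<le> lam"
  shows "distinct \<sigma> \<Longrightarrow> k \<in> set \<sigma> \<Longrightarrow> u \<in> Fk X k \<Longrightarrow>
    inner (Y - fit_sum (cycle Y X lam f \<sigma>)) (u - cycle Y X lam f \<sigma> $ k)
      \<le> lam * (spread u - spread (cycle Y X lam f \<sigma> $ k))
         + cycle_path Y X lam f \<sigma> * norm (u - cycle Y X lam f \<sigma> $ k)"
proof (induction \<sigma> arbitrary: f)
  case (Cons k' \<sigma>)
  let ?f1 = "block_step Y X lam f k'"
  let ?g = "cycle Y X lam ?f1 \<sigma>"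
  have path: "cycle_path Y X lam ?f1 \<sigma> \<le> cycle_path Y X lam f (k' # \<sigma>)"
    by (simp add: block_move_def)
  show ?case
  proof (cases "k \<in> set \<sigma>")
    case True
    then have "inner (Y - fit_sum ?g) (u - ?g$k)
        \<le> lam * (spread u - spread (?g$k)) + cycle_path Y X lam ?f1 \<sigma> * norm (u - ?g$k)"
      using Cons by simp
    also have "\<dots> \<le> lam * (spread u - spread (?g$k)) + cycle_path Y X lam f (k' # \<sigma>) * norm (u - ?g$k)"
      using path by (simp add: mult_right_mono)
    finally show ?thesis by simp
  next
    case False
    then have "k = k'" "?g$k = ?f1$k"
      using Cons.prems by (auto intro: cycle_nth_unchanged)
    then have vi: "inner (Y - fit_sum ?f1) (u - ?g$k) \<le> lam * (spread u - spread (?g$k))"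
      using block_step_variational[OF lam Cons.prems(3)] by simp
    have "inner (Y - fit_sum ?g) (u - ?g$k)
          = inner (Y - fit_sum ?f1) (u - ?g$k) + inner (fit_sum ?f1 - fit_sum ?g) (u - ?g$k)"
      by (simp add: inner_diff_left)
    also have "inner (fit_sum ?f1 - fit_sum ?g) (u - ?g$k) \<le> norm (fit_sum ?f1 - fit_sum ?g) * norm (u - ?g$k)"
      by (rule norm_cauchy_schwarz)
    also have "norm (fit_sum ?f1 - fit_sum ?g) \<le> cycle_path Y X lam f (k' # \<sigma>)"
      using cycle_fit_displacement[of Y X lam ?f1 \<sigma>] path by (simp add: norm_minus_commute)
    finally show ?thesis
      using vi by (simp add: mult_right_mono)
  qed
qed simp

text \<open>This is obtained by summing the
  approximate optimality conditions of all blocks and using convexity of the squared norm.\<close>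
lemma cycle_gap:
  fixes f fs :: "real^'n^'p"
  assumes lam: "0 \<le> lam" and \<sigma>: "distinct \<sigma>" "set \<sigma> = UNIV" and fs: "fs \<in> feasible X"
  shows "liso_loss Y lam (cycle Y X lam f \<sigma>) - liso_loss Y lam fs
           \<le> real CARD('p) * cycle_path Y X lam f \<sigma> * norm (fs - cycle Y X lam f \<sigma>)"
proof -
  let ?g = "cycle Y X lam f \<sigma>" and ?c = "cycle_path Y X lam f \<sigma>"
  let ?b = "Y - fit_sum ?g"
  have "(\<Sum>k\<in>UNIV. inner ?b (fs$k - ?g$k))
      \<le> (\<Sum>k\<in>UNIV. lam * (spread (fs$k) - spread (?g$k)) + ?c * norm (fs$k - ?g$k))"
    using fs \<sigma> by (intro sum_mono cycle_variational[OF lam]) (auto simp: feasible_def)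
  also have "\<dots> \<le> lam * (\<Sum>k\<in>UNIV. spread (fs$k)) - lam * (\<Sum>k\<in>UNIV. spread (?g$k))
                   + ?c * (real CARD('p) * norm (fs - ?g))"
  proof -
    have "(\<Sum>k\<in>UNIV. norm (fs$k - ?g$k)) \<le> real CARD('p) * norm (fs - ?g)"
      using sum_bounded_above[of UNIV "\<lambda>k. norm (fs$k - ?g$k)" "norm (fs - ?g)"]
        Finite_Cartesian_Product.norm_nth_le[of "fs - ?g"] by simp
    then have "?c * (\<Sum>k\<in>UNIV. norm (fs$k - ?g$k)) \<le> ?c * (real CARD('p) * norm (fs - ?g))"
      using cycle_path_nonneg[of Y X lam f \<sigma>] by (rule mult_left_mono)
    then show ?thesis
      by (simp add: sum.distrib sum_distrib_left sum_subtractf algebra_simps)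
  qed
  finally have vi: "inner ?b (fit_sum fs - fit_sum ?g)
      \<le> lam * (\<Sum>k\<in>UNIV. spread (fs$k)) - lam * (\<Sum>k\<in>UNIV. spread (?g$k))
         + ?c * (real CARD('p) * norm (fs - ?g))"
    by (simp add: fit_sum_def inner_sum_right sum_subtractf inner_diff_right)
  have "(norm (Y - fit_sum fs))\<^sup>2 = (norm (?b - (fit_sum fs - fit_sum ?g)))\<^sup>2"
    by (simp add: algebra_simps)
  also have "\<dots> = (norm ?b)\<^sup>2 - 2 * inner ?b (fit_sum fs - fit_sum ?g) + (norm (fit_sum fs - fit_sum ?g))\<^sup>2"
    by (rule norm_diff_sq)
  finally have "(norm ?b)\<^sup>2 - 2 * inner ?b (fit_sum fs - fit_sum ?g) \<le> (norm (Y - fit_sum fs))\<^sup>2"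
    by simp
  then show ?thesis
    using vi unfolding liso_loss_eq by (simp add: algebra_simps)
qed

section \<open>A lemma on square-summable sequences\<close>

text \<open>If the squares of c have bounded partial sums, the partial sums of c grow at most like
  the square root of their length (Cauchy-Schwarz).\<close>
lemma partial_sum_sq_le:
  fixes c :: "nat \<Rightarrow> real"
  assumes bnd: "\<And>N. (\<Sum>i<N. (c i)\<^sup>2) \<le> B" and n: "1 \<le> n"
  shows "(A + (\<Sum>i<n. c i))\<^sup>2 \<le> (2 * A\<^sup>2 + 2 * B) * real n"
proof -
  let ?S = "\<Sum>i<n. c i"
  have "?S\<^sup>2 \<le> (\<Sum>i<n. (c i)\<^sup>2) * real n"
    using sum_squared_le_sum_of_squares[of c "{..<n}"] by simp
  also have "\<dots> \<le> B * real n"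
    using bnd by (intro mult_right_mono) auto
  finally have S: "?S\<^sup>2 \<le> B * real n" .
  have "(A + ?S)\<^sup>2 + (A - ?S)\<^sup>2 = 2 * A\<^sup>2 + 2 * ?S\<^sup>2"
    by (simp add: power2_eq_square algebra_simps)
  then have "(A + ?S)\<^sup>2 \<le> 2 * A\<^sup>2 + 2 * ?S\<^sup>2"
    using zero_le_power2[of "A - ?S"] by linarith
  also have "\<dots> \<le> 2 * A\<^sup>2 * real n + 2 * (B * real n)"
    using S n mult_left_mono[of 1 "real n" "A\<^sup>2"] by simp
  finally show ?thesis by (simp add: algebra_simps)
qed

text \<open>A square-summable sequence cannot satisfy
  c m * (A + sum_{i<=m} c i) >= eps for all m: this would give
  (c m)^2 >= const / (m+1), and the harmonic series diverges.\<close>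
lemma square_summable_product_small:
  fixes c :: "nat \<Rightarrow> real"
  assumes bnd: "\<And>N. (\<Sum>i<N. (c i)\<^sup>2) \<le> B" and eps: "0 < \<epsilon>"
  shows "\<exists>m. c m * (A + (\<Sum>i<Suc m. c i)) < \<epsilon>"
proof (rule ccontr)
  assume "\<not> ?thesis"
  then have big: "\<epsilon> \<le> c m * (A + (\<Sum>i<Suc m. c i))" for m
    by (simp add: not_less)
  define K where "K = 2 * A\<^sup>2 + 2 * B"
  have le: "\<epsilon>\<^sup>2 \<le> (c m)\<^sup>2 * (K * real (Suc m))" for m
  proof -
    have "\<epsilon>\<^sup>2 \<le> (c m * (A + (\<Sum>i<Suc m. c i)))\<^sup>2"
      using big[of m] eps by (intro power_mono) auto
    also have "\<dots> \<le> (c m)\<^sup>2 * (K * real (Suc m))"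
      unfolding power_mult_distrib K_def
      by (intro mult_left_mono partial_sum_sq_le[OF bnd]) auto
    finally show ?thesis .
  qed
  have "0 < \<epsilon>\<^sup>2" using eps by simp
  also have "\<epsilon>\<^sup>2 \<le> (c 0)\<^sup>2 * K"
    using le[of 0] by simp
  finally have "0 < (c 0)\<^sup>2 * K" .
  then have K: "0 < K"
    using zero_le_power2[of "c 0"] by (simp add: zero_less_mult_iff)
  have low: "\<epsilon>\<^sup>2 / K * inverse (real (Suc m)) \<le> (c m)\<^sup>2" for m
  proof -
    have "\<epsilon>\<^sup>2 / (K * real (Suc m)) \<le> (c m)\<^sup>2"
      using le[of m] K by (subst pos_divide_le_eq) auto
    then show ?thesis by (simp add: divide_inverse mult.assoc)
  qed
  have "summable (\<lambda>m. \<epsilon>\<^sup>2 / K * inverse (real (Suc m)))"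
  proof (rule summable_comparison_test'[where N=0])
    show "summable (\<lambda>m. (c m)\<^sup>2)"
      using bnd by (intro summableI_nonneg_bounded) auto
    show "norm (\<epsilon>\<^sup>2 / K * inverse (real (Suc m))) \<le> (c m)\<^sup>2" for m
      using low[of m] K by (simp add: abs_of_nonneg)
  qed
  moreover have "\<epsilon>\<^sup>2 / K \<noteq> 0"
    using K eps by simp
  ultimately have "summable (\<lambda>m. inverse (real (Suc m)))" by simp
  then have "summable (\<lambda>n. inverse (real n))"
    using summable_Suc_iff[of "\<lambda>n. inverse (real n)"] by simp
  then show False using not_summable_harmonic[where 'a=real] by simp
qed

section \<open>Convergence of the loss along any sequence of cycle orders\<close>

lemma liso_loss_nonneg: "0 \<le> lam \<Longrightarrow> 0 \<le> liso_loss Y lam f"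
  unfolding liso_loss_eq by (intro add_nonneg_nonneg mult_nonneg_nonneg sum_nonneg spread_nonneg) auto

definition perm_stream :: "('p::finite) list stream \<Rightarrow> bool" where
  "perm_stream \<omega> \<longleftrightarrow> (\<forall>m. \<omega> !! m \<in> permutations_of_set (UNIV :: 'p set))"

lemma perm_stream_nth:
  fixes \<omega> :: "('p::finite) list stream"
  assumes "perm_stream \<omega>"
  shows "distinct (\<omega> !! m)" "set (\<omega> !! m) = UNIV" "length (\<omega> !! m) = CARD('p)"
  using assms distinct_card[of "\<omega> !! m"] by (auto simp: perm_stream_def permutations_of_set_def)

definition backfit_path :: "real^'n \<Rightarrow> real^'p^'n \<Rightarrow> real \<Rightarrow> real^'n^'p \<Rightarrow> 'p list stream \<Rightarrow> nat \<Rightarrow> real" where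
  "backfit_path Y X lam f0 \<omega> m = cycle_path Y X lam (backfit Y X lam f0 \<omega> m) (\<omega> !! m)"

lemma backfit_feasible:
  assumes "0 \<le> lam" "f0 \<in> feasible X"
  shows "backfit Y X lam f0 \<omega> m \<in> feasible X"
  using assms by (induction m) (auto intro: cycle_feasible)

lemma backfit_loss_antimono:
  assumes "0 \<le> lam" "f0 \<in> feasible X"
  shows "antimono (\<lambda>m. liso_loss Y lam (backfit Y X lam f0 \<omega> m))"
  using cycle_loss_le[OF assms(1) backfit_feasible[OF assms]] by (intro decseq_SucI) simp

text \<open>The path lengths of the cycles are square-summable: each cycle pays for its squared path
  length with a proportional decrease of the loss, which is bounded below by 0.\<close>
lemma backfit_path_sq_sum_le:
  fixes f0 :: "real^'n^'p"
  assumes lam: "0 \<le> lam" and f0: "f0 \<in> feasible X" and \<omega>: "perm_stream \<omega>"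
  shows "(\<Sum>i<N. (backfit_path Y X lam f0 \<omega> i)\<^sup>2) \<le> 2 * real CARD('p) * liso_loss Y lam f0"
proof -
  let ?L = "\<lambda>m. liso_loss Y lam (backfit Y X lam f0 \<omega> m)"
  have "(\<Sum>i<N. (backfit_path Y X lam f0 \<omega> i)\<^sup>2) \<le> 2 * real CARD('p) * (?L 0 - ?L N)"
  proof (induction N)
    case (Suc N)
    then show ?case
      using cycle_path_sq_le[OF lam backfit_feasible[OF lam f0, where Y=Y and \<omega>=\<omega> and m=N],
          where \<sigma>="\<omega> !! N" and Y=Y]
      by (simp add: backfit_path_def perm_stream_nth[OF \<omega>] algebra_simps)
  qed simp
  also have "\<dots> \<le> 2 * real CARD('p) * liso_loss Y lam f0"
    using liso_loss_nonneg[OF lam, of Y "backfit Y X lam f0 \<omega> N"] by simp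
  finally show ?thesis .
qed

lemma backfit_dist_le:
  "norm (fs - backfit Y X lam f0 \<omega> n) \<le> norm (fs - f0) + (\<Sum>i<n. backfit_path Y X lam f0 \<omega> i)"
proof (induction n)
  case (Suc n)
  let ?F = "backfit Y X lam f0 \<omega>"
  have "norm (fs - ?F (Suc n)) \<le> norm (fs - ?F n) + norm (?F (Suc n) - ?F n)"
    using norm_triangle_ineq[of "fs - ?F n" "?F n - ?F (Suc n)"] by (simp add: norm_minus_commute)
  also have "norm (?F (Suc n) - ?F n) \<le> backfit_path Y X lam f0 \<omega> n"
    unfolding backfit_path_def by (simp add: cycle_displacement)
  finally show ?case using Suc.IH by simp
qed simp

lemma backfit_gap:
  fixes f0 fs :: "real^'n^'p"
  assumes lam: "0 \<le> lam" and \<omega>: "perm_stream \<omega>" and fs: "fs \<in> feasible X"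
  shows "liso_loss Y lam (backfit Y X lam f0 \<omega> (Suc m)) - liso_loss Y lam fs
    \<le> real CARD('p) * (backfit_path Y X lam f0 \<omega> m
         * (norm (fs - f0) + (\<Sum>i<Suc m. backfit_path Y X lam f0 \<omega> i)))"
proof -
  have "liso_loss Y lam (backfit Y X lam f0 \<omega> (Suc m)) - liso_loss Y lam fs
      \<le> real CARD('p) * backfit_path Y X lam f0 \<omega> m * norm (fs - backfit Y X lam f0 \<omega> (Suc m))"
    using cycle_gap[OF lam perm_stream_nth(1,2)[OF \<omega>] fs] by (simp add: backfit_path_def)
  also have "\<dots> \<le> real CARD('p) * backfit_path Y X lam f0 \<omega> m
                  * (norm (fs - f0) + (\<Sum>i<Suc m. backfit_path Y X lam f0 \<omega> i))"
    using backfit_dist_le[of fs Y X lam f0 \<omega> "Suc m"] cycle_path_nonneg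
    by (intro mult_left_mono mult_nonneg_nonneg) (auto simp: backfit_path_def)
  finally show ?thesis by (simp add: mult.assoc)
qed

text \<open>Deterministic version of the first claim: along every sequence of permutations the loss
  decreases to its infimum over the feasible set.\<close>
theorem backfit_loss_tendsto_Inf:
  fixes f0 :: "real^'n^'p"
  assumes lam: "0 \<le> lam" and f0: "f0 \<in> feasible X" and \<omega>: "perm_stream \<omega>"
  shows "(\<lambda>m. liso_loss Y lam (backfit Y X lam f0 \<omega> m)) \<longlonglongrightarrow> (INF g\<in>feasible X. liso_loss Y lam g)"
proof -
  let ?L = "liso_loss Y lam" and ?F = "backfit Y X lam f0 \<omega>" and ?c = "backfit_path Y X lam f0 \<omega>"
  obtain l where l: "(\<lambda>m. ?L (?F m)) \<longlonglongrightarrow> l" "\<And>m. l \<le> ?L (?F m)"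
    using decseq_convergent[OF backfit_loss_antimono[OF lam f0], of 0] liso_loss_nonneg[OF lam]
    by blast
  have below: "l \<le> ?L fs" if fs: "fs \<in> feasible X" for fs
  proof (rule ccontr)
    assume "\<not> l \<le> ?L fs"
    then have eps: "0 < (l - ?L fs) / real CARD('p)" by simp
    obtain m where "?c m * (norm (fs - f0) + (\<Sum>i<Suc m. ?c i)) < (l - ?L fs) / real CARD('p)"
      using square_summable_product_small[OF backfit_path_sq_sum_le[OF lam f0 \<omega>] eps] by blast
    then have "real CARD('p) * (?c m * (norm (fs - f0) + (\<Sum>i<Suc m. ?c i))) < l - ?L fs"
      by (simp add: field_simps)
    moreover have "l - ?L fs \<le> ?L (?F (Suc m)) - ?L fs" using l(2)[of "Suc m"] by simp
    ultimately show False using backfit_gap[OF lam \<omega> fs, of Y f0 m] by linarith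
  qed
  have bdd: "bdd_below (?L ` feasible X)"
    using liso_loss_nonneg[OF lam] by (intro bdd_belowI) auto
  have "l = (INF g\<in>feasible X. ?L g)"
  proof (rule antisym)
    show "l \<le> (INF g\<in>feasible X. ?L g)"
      using f0 below by (intro cINF_greatest) auto
    show "(INF g\<in>feasible X. ?L g) \<le> l"
      using bdd backfit_feasible[OF lam f0]
      by (intro LIMSEQ_le_const[OF l(1)] exI[of _ 0] allI impI cINF_lower) auto
  qed
  then show ?thesis using l(1) by simp
qed

text \<open>The loss is convex: a convex function of the fit plus a nonnegative multiple of a sum
  of convex penalties.\<close>
lemma convex_on_liso_loss:
  fixes Y :: "real^'n"
  assumes lam: "0 \<le> lam"
  shows "convex_on UNIV (liso_loss Y lam :: real^'n^'p \<Rightarrow> real)"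
proof (rule convex_onI)
  fix e :: real and f g :: "real^'n^'p"
  assume e: "0 < e" "e < 1"
  let ?h = "(1-e) *\<^sub>R f + e *\<^sub>R g"
  let ?a = "norm (Y - fit_sum f)" and ?b = "norm (Y - fit_sum g)"
  have "fit_sum ?h = (1-e) *\<^sub>R fit_sum f + e *\<^sub>R fit_sum g"
    by (simp add: fit_sum_def sum.distrib scaleR_sum_right)
  then have "Y - fit_sum ?h = (1-e) *\<^sub>R (Y - fit_sum f) + e *\<^sub>R (Y - fit_sum g)"
    by (simp add: algebra_simps)
  then have "norm (Y - fit_sum ?h) \<le> (1-e) * ?a + e * ?b"
    using e norm_triangle_ineq[of "(1-e) *\<^sub>R (Y - fit_sum f)" "e *\<^sub>R (Y - fit_sum g)"] by simp
  then have "(norm (Y - fit_sum ?h))\<^sup>2 \<le> ((1-e) * ?a + e * ?b)\<^sup>2"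
    by (intro power_mono) auto
  also have "\<dots> \<le> (1-e) * ?a\<^sup>2 + e * ?b\<^sup>2"
    using e convex_onD[OF convex_power2, of e ?a ?b] by simp
  finally have fit: "1/2 * (norm (Y - fit_sum ?h))\<^sup>2 \<le> (1-e) * (1/2 * ?a\<^sup>2) + e * (1/2 * ?b\<^sup>2)"
    by simp
  have "(\<Sum>k\<in>UNIV. spread (?h$k)) \<le> (\<Sum>k\<in>UNIV. (1-e) * spread (f$k) + e * spread (g$k))"
    using e by (intro sum_mono) (simp add: convex_onD[OF convex_on_spread])
  also have "\<dots> = (1-e) * (\<Sum>k\<in>UNIV. spread (f$k)) + e * (\<Sum>k\<in>UNIV. spread (g$k))"
    by (simp add: sum.distrib sum_distrib_left)
  finally have "lam * (\<Sum>k\<in>UNIV. spread (?h$k)) \<le> lam * ((1-e) * (\<Sum>k\<in>UNIV. spread (f$k)) + e * (\<Sum>k\<in>UNIV. spread (g$k)))"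
    using lam by (rule mult_left_mono)
  then have pen: "lam * (\<Sum>k\<in>UNIV. spread (?h$k))
      \<le> (1-e) * (lam * (\<Sum>k\<in>UNIV. spread (f$k))) + e * (lam * (\<Sum>k\<in>UNIV. spread (g$k)))"
    by (simp add: algebra_simps)
  show "liso_loss Y lam ?h \<le> (1-e) * liso_loss Y lam f + e * liso_loss Y lam g"
    unfolding liso_loss_eq distrib_left using fit pen by linarith
qed simp

text \<open>The loss is continuous, since the spread is Lipschitz.\<close>
lemma continuous_on_liso_loss: "continuous_on S (liso_loss Y lam :: real^'n^'p \<Rightarrow> real)"
proof -
  have "continuous_on S (\<lambda>f::real^'n^'p. spread (f$k))" for k
    by (rule continuous_on_compose2[OF continuous_on_spread[of UNIV]]) (auto intro: continuous_intros)
  then show ?thesis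
    unfolding liso_loss_eq[abs_def] fit_sum_def by (intro continuous_intros) auto
qed

section \<open>Unique minimisers of convex functions attract minimising sequences\<close>

text \<open>A point of S at distance at least delta from the minimiser xs can be pulled back along
  the segment to the sphere of radius delta around xs without increasing L.\<close>
lemma convex_pull_to_sphere:
  fixes L :: "'a::real_normed_vector \<Rightarrow> real"
  assumes L: "convex_on S L" and xs: "xs \<in> S" "\<forall>g\<in>S. L xs \<le> L g"
    and y: "y \<in> S" "\<delta> \<le> dist y xs" and \<delta>: "0 < \<delta>"
  shows "\<exists>z\<in>S \<inter> sphere xs \<delta>. L z \<le> L y"
proof -
  define t where "t = \<delta> / dist y xs"
  define z where "z = (1 - t) *\<^sub>R xs + t *\<^sub>R y"
  have dpos: "0 < dist y xs" using y \<delta> by linarith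
  have t: "0 \<le> t" "t \<le> 1" using y \<delta> dpos by (auto simp: t_def divide_le_eq)
  have "z \<in> S" unfolding z_def using convexD_alt[OF convex_on_imp_convex[OF L] xs(1) y(1)] t by simp
  moreover have "dist xs z = \<delta>"
  proof -
    have "xs - z = - (t *\<^sub>R (y - xs))" by (simp add: z_def algebra_simps)
    then have "dist xs z = t * dist y xs" using t by (simp add: dist_norm)
    then show ?thesis using dpos by (simp add: t_def)
  qed
  moreover have "L z \<le> L y"
  proof -
    have "L z \<le> (1 - t) * L xs + t * L y" unfolding z_def by (rule convex_onD[OF L t xs(1) y(1)])
    also have "\<dots> \<le> (1 - t) * L y + t * L y"
      using xs(2) y(1) t by (intro add_right_mono mult_left_mono) auto
    finally show ?thesis by (simp add: algebra_simps)
  qed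
  ultimately show ?thesis by auto
qed

lemma unique_min_uniform_gap:
  fixes L :: "'a::euclidean_space \<Rightarrow> real"
  assumes S: "closed S" and L: "convex_on S L" "continuous_on S L"
    and xs: "xs \<in> S" "\<forall>g\<in>S. L xs \<le> L g"
    and unique: "\<forall>h\<in>S. (\<forall>g\<in>S. L h \<le> L g) \<longrightarrow> h = xs"
    and \<delta>: "0 < \<delta>"
  shows "\<exists>\<eta>>L xs. \<forall>y\<in>S. \<delta> \<le> dist y xs \<longrightarrow> \<eta> \<le> L y"
proof (cases "S \<inter> sphere xs \<delta> = {}")
  case True
  then show ?thesis
    using convex_pull_to_sphere[OF L(1) xs _ _ \<delta>] by (intro exI[of _ "L xs + 1"]) auto
next
  case False
  have "compact (S \<inter> sphere xs \<delta>)" using S by (intro closed_Int_compact) auto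
  moreover have "continuous_on (S \<inter> sphere xs \<delta>) L" using L(2) by (rule continuous_on_subset) auto
  ultimately obtain g0 where g0: "g0 \<in> S \<inter> sphere xs \<delta>" "\<forall>z\<in>S \<inter> sphere xs \<delta>. L g0 \<le> L z"
    using continuous_attains_inf[OF _ False] by blast
  have "L xs < L g0"
  proof (rule ccontr)
    assume "\<not> L xs < L g0"
    then have "g0 = xs" using unique g0(1) xs(2) by force
    then show False using g0(1) \<delta> by simp
  qed
  moreover have "L g0 \<le> L y" if "y \<in> S" "\<delta> \<le> dist y xs" for y
    using convex_pull_to_sphere[OF L(1) xs that \<delta>] g0(2) by (blast intro: order.trans)
  ultimately show ?thesis by blast
qed

lemma tendsto_unique_min:
  fixes L :: "'a::euclidean_space \<Rightarrow> real"
  assumes S: "closed S" and L: "convex_on S L" "continuous_on S L"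
    and xs: "xs \<in> S" "\<forall>g\<in>S. L xs \<le> L g"
    and unique: "\<forall>h\<in>S. (\<forall>g\<in>S. L h \<le> L g) \<longrightarrow> h = xs"
    and F: "\<And>m. F m \<in> S" and lim: "(\<lambda>m. L (F m)) \<longlonglongrightarrow> L xs"
  shows "F \<longlonglongrightarrow> xs"
proof (rule tendstoI)
  fix \<delta> :: real assume \<delta>: "0 < \<delta>"
  obtain \<eta> where \<eta>: "L xs < \<eta>" "\<And>y. y \<in> S \<Longrightarrow> \<delta> \<le> dist y xs \<Longrightarrow> \<eta> \<le> L y"
    using unique_min_uniform_gap[OF S L xs unique \<delta>] by blast
  have "\<forall>\<^sub>F m in sequentially. L (F m) < \<eta>" by (rule order_tendstoD(2)[OF lim \<eta>(1)])
  then show "\<forall>\<^sub>F m in sequentially. dist (F m) xs < \<delta>"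
    by eventually_elim (use F \<eta>(2) in \<open>force simp: not_le[symmetric]\<close>)
qed

lemma AE_perm_stream: "AE \<omega> in (perm_law :: ('p::finite) list stream measure). perm_stream \<omega>"
proof -
  let ?P = "permutations_of_set (UNIV :: 'p set)"
  have "?P \<noteq> {}"
    using finite_distinct_list[of "UNIV :: 'p set"] by (auto simp: permutations_of_set_def)
  then have "AE \<omega> in stream_space (measure_pmf (pmf_of_set ?P)). stream_all (\<lambda>\<sigma>. \<sigma> \<in> ?P) \<omega>"
    by (intro prob_space.AE_stream_all prob_space_measure_pmf) (auto simp: AE_measure_pmf_iff)
  then show ?thesis unfolding perm_law_def perm_stream_def stream_all_def .
qed

theorem theorem3:
  fixes Y :: "real^'n" and X :: "real^'p^'n" and lam :: real
    and f0 :: "real^'n^'p"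
  assumes Ysum: "(\<Sum>i\<in>UNIV. Y $ i) = 0"
    and lam: "lam \<ge> 0"
    and f0: "f0 \<in> feasible X"
  shows "(AE \<omega> in perm_law.
            antimono (\<lambda>m. liso_loss Y lam (backfit Y X lam f0 \<omega> m)) \<and>
            (\<lambda>m. liso_loss Y lam (backfit Y X lam f0 \<omega> m))
              \<longlonglongrightarrow> (INF g\<in>feasible X. liso_loss Y lam g))
      \<and> (\<forall>fstar. fstar \<in> feasible X \<and> (\<forall>g\<in>feasible X. liso_loss Y lam fstar \<le> liso_loss Y lam g)
            \<and> (\<forall>h\<in>feasible X. (\<forall>g\<in>feasible X. liso_loss Y lam h \<le> liso_loss Y lam g) \<longrightarrow> h = fstar)
          \<longrightarrow> (AE \<omega> in perm_law. (\<lambda>m. backfit Y X lam f0 \<omega> m) \<longlonglongrightarrow> fstar))"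
proof (intro conjI allI impI)
  show "AE \<omega> in perm_law.
            antimono (\<lambda>m. liso_loss Y lam (backfit Y X lam f0 \<omega> m)) \<and>
            (\<lambda>m. liso_loss Y lam (backfit Y X lam f0 \<omega> m))
              \<longlonglongrightarrow> (INF g\<in>feasible X. liso_loss Y lam g)"
    using AE_perm_stream
    by eventually_elim (simp add: backfit_loss_antimono[OF lam f0] backfit_loss_tendsto_Inf[OF lam f0])
next
  fix fstar
  assume "fstar \<in> feasible X \<and> (\<forall>g\<in>feasible X. liso_loss Y lam fstar \<le> liso_loss Y lam g)
            \<and> (\<forall>h\<in>feasible X. (\<forall>g\<in>feasible X. liso_loss Y lam h \<le> liso_loss Y lam g) \<longrightarrow> h = fstar)"
  then have fstar: "fstar \<in> feasible X" "\<forall>g\<in>feasible X. liso_loss Y lam fstar \<le> liso_loss Y lam g"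
    and unique: "\<forall>h\<in>feasible X. (\<forall>g\<in>feasible X. liso_loss Y lam h \<le> liso_loss Y lam g) \<longrightarrow> h = fstar"
    by blast+
  have "bdd_below (liso_loss Y lam ` feasible X)"
    using liso_loss_nonneg[OF lam] by (intro bdd_belowI) auto
  then have inf: "(INF g\<in>feasible X. liso_loss Y lam g) = liso_loss Y lam fstar"
    using fstar by (intro antisym cINF_lower cINF_greatest) auto
  have convex: "convex_on (feasible X) (liso_loss Y lam)"
    by (rule convex_on_subset[OF convex_on_liso_loss[OF lam] subset_UNIV convex_feasible])
  show "AE \<omega> in perm_law. (\<lambda>m. backfit Y X lam f0 \<omega> m) \<longlonglongrightarrow> fstar"
    using AE_perm_stream
  proof eventually_elim
    case (elim \<omega>)
    show ?case
      using backfit_loss_tendsto_Inf[OF lam f0 elim, of Y] unfolding inf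
      by (rule tendsto_unique_min[OF closed_feasible convex continuous_on_liso_loss fstar unique
            backfit_feasible[OF lam f0]])
  qed
qed

end
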